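(* Let $G=\mathfrak{S}_3$ with identity $id$. Let $(\mu_t)_{t\ge0}$ (resp. $(\eta_t)_{t\ge0}$) be the continuous convolution semigroup of probability measures on $G$ starting from $\delta_{id}$ associated with the jump measure $m$ (resp. $m_0$), where $m((12))=0,\ m((13))=1,\ m((23))=2,\ m((123))=2,\ m((132))=0$, and $m_0((12))=m_0((13))=m_0((23))=m_0((123))=m_0((132))=1$ (both measures vanish at $id$). Then $\mu_1$ is quasi-invariant by conjugation, and for every $n\in\mathbb{N}$, $\int_G(\mu_1^g)^{*n}\,dg=\eta_1^{*n}$.
   Context: The convolution semigroup with jump measure $m$ is the family of laws of the compound Poisson process with jump measure $m$: $\mu_t=e^{-t\,m(G)}\sum_{k\ge0}\frac{t^k}{k!}m^{*k}$ (with $m^{*0}=\delta_{id}$). For $g\in G$, $\mu^g$ is the image of $\mu$ under $x\mapsto g^{-1}xg$; $dg$ is the uniform probability measure on $G$. A probability measure $\mu$ is quasi-invariant by conjugation if there exists a probability measure $\nu$ with $\int_G(\mu^g)^{*n}dg=\nu^{*n}$ for all $n\in\mathbb{N}$. *)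

theory Defs
  imports "HOL-Analysis.Analysis" "HOL-Combinatorics.Perm"
begin

text \<open>The symmetric group S_3, realised as the permutations of nat moving only 1, 2, 3.
  The product is composition: (p * q) applied to a is p applied to (q applied to a).\<close>
definition S3 :: "nat perm set" where
  "S3 = {p. affected p \<subseteq> {1, 2, 3}}"

type_synonym meas = "nat perm \<Rightarrow> real"

definition delta_id :: meas where
  "delta_id = (\<lambda>z. if z = 1 then 1 else 0)"

definition conv :: "meas \<Rightarrow> meas \<Rightarrow> meas" where
  "conv mu nu = (\<lambda>z. \<Sum>x\<in>S3. \<Sum>y\<in>S3. if x * y = z then mu x * nu y else 0)"

definition conv_pow :: "meas \<Rightarrow> nat \<Rightarrow> meas" where
  "conv_pow mu n = (conv mu ^^ n) delta_id"

text \<open>Compound Poisson law at time t with jump measure m: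
  mu_t = exp(-t m(G)) * sum_k t^k/k! m^{*k}.\<close>
definition cpp :: "meas \<Rightarrow> real \<Rightarrow> meas" where
  "cpp m t = (\<lambda>z. exp (- t * sum m S3) * (\<Sum>k. t ^ k / fact k * conv_pow m k z))"

definition conj_img :: "meas \<Rightarrow> nat perm \<Rightarrow> meas" where
  "conj_img mu g = (\<lambda>y. \<Sum>x\<in>S3. if inverse g * x * g = y then mu x else 0)"

definition avg_conj :: "meas \<Rightarrow> nat \<Rightarrow> meas" where
  "avg_conj mu n = (\<lambda>y. (\<Sum>g\<in>S3. conv_pow (conj_img mu g) n y) / real (card S3))"

definition prob_meas :: "meas \<Rightarrow> bool" where
  "prob_meas nu \<longleftrightarrow> (\<forall>x. 0 \<le> nu x) \<and> (\<forall>x. x \<notin> S3 \<longrightarrow> nu x = 0) \<and> sum nu S3 = 1"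

definition quasi_invariant :: "meas \<Rightarrow> bool" where
  "quasi_invariant mu \<longleftrightarrow> (\<exists>nu. prob_meas nu \<and> (\<forall>n. avg_conj mu n = conv_pow nu n))"

text \<open>Jump measures. Perm.cycle [1,2,3] is the 3-cycle (123): 1->2->3->1.\<close>
definition jm :: meas where
  "jm = (\<lambda>x. if x = Perm.swap 1 3 then 1
             else if x = Perm.swap 2 3 then 2
             else if x = Perm.cycle [1, 2, 3] then 2
             else 0)"

definition jm0 :: meas where
  "jm0 = (\<lambda>x. if x \<in> S3 \<and> x \<noteq> 1 then 1 else 0)"

end

theory Submission imports Defs begin

(* Both jump measures lie in the span of the point mass delta at id, the counting measure C of
   S3 and the signed measure nu = -(12) + (23) + (123) - (132): m = -delta + C + nu and
   m0 = -delta + C. As nu has total mass 0 and nu * nu = 0, convolution on this span obeys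
   C * C = 6 C and C * nu = nu * C = 0, so convolution powers and the compound Poisson series
   are explicit: mu_1 = alpha delta + beta C + alpha nu and eta_1 = alpha delta + beta C with
   alpha = exp (-6), beta = (1 - alpha) / 6. Conjugation fixes delta and C and preserves these
   properties of nu, so (mu_1^g)^{*n} differs from eta_1^{*n} only by a multiple of nu^g, and
   averaging over g removes it because nu sums to zero on each conjugacy class. *)

declare One_nat_def [simp del]

definition t12 :: "nat perm" where "t12 = Perm.swap 1 2"
definition t13 :: "nat perm" where "t13 = Perm.swap 1 3"
definition t23 :: "nat perm" where "t23 = Perm.swap 2 3"
definition c123 :: "nat perm" where "c123 = Perm.cycle [1, 2, 3]"
definition c132 :: "nat perm" where "c132 = Perm.cycle [1, 3, 2]"

lemma S3_eq_iff:
  assumes "p \<in> S3" "q \<in> S3"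
  shows "p = q \<longleftrightarrow> (\<forall>a\<in>{1, 2, 3}. Perm.apply p a = Perm.apply q a)"
proof
  assume agree: "\<forall>a\<in>{1, 2, 3}. Perm.apply p a = Perm.apply q a"
  show "p = q"
  proof (rule perm_eqI)
    fix a
    show "Perm.apply p a = Perm.apply q a"
    proof (cases "a \<in> {1, 2, 3}")
      case False
      then have "a \<notin> affected p" "a \<notin> affected q" using assms unfolding S3_def by auto
      then show ?thesis by (simp add: in_affected)
    qed (use agree in blast)
  qed
qed simp

lemma one_in_S3: "1 \<in> S3"
  unfolding S3_def by simp

lemma times_in_S3: "p \<in> S3 \<Longrightarrow> q \<in> S3 \<Longrightarrow> p * q \<in> S3"
  unfolding S3_def using affected_times[of p q] by blast

lemma inverse_in_S3: "p \<in> S3 \<Longrightarrow> inverse p \<in> S3"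
  unfolding S3_def by simp

lemma swap_in_S3: "a \<in> {1, 2, 3} \<Longrightarrow> b \<in> {1, 2, 3} \<Longrightarrow> Perm.swap a b \<in> S3"
  unfolding S3_def by (cases "a = b") (auto simp: affected_swap)

lemma generators_in_S3: "t12 \<in> S3" "t13 \<in> S3" "t23 \<in> S3" "c123 \<in> S3" "c132 \<in> S3"
  unfolding t12_def t13_def t23_def c123_def c132_def by (auto intro!: times_in_S3 swap_in_S3)

lemma apply_generators:
  "Perm.apply t12 1 = 2" "Perm.apply t12 2 = 1" "Perm.apply t12 3 = 3"
  "Perm.apply t13 1 = 3" "Perm.apply t13 2 = 2" "Perm.apply t13 3 = 1"
  "Perm.apply t23 1 = 1" "Perm.apply t23 2 = 3" "Perm.apply t23 3 = 2"
  "Perm.apply c123 1 = 2" "Perm.apply c123 2 = 3" "Perm.apply c123 3 = 1"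
  "Perm.apply c132 1 = 3" "Perm.apply c132 2 = 1" "Perm.apply c132 3 = 2"
  by (simp_all add: t12_def t13_def t23_def c123_def c132_def apply_times)

lemmas S3_simps = apply_generators apply_times generators_in_S3 one_in_S3 times_in_S3 inverse_in_S3

lemma apply_in_S3_range:
  assumes "p \<in> S3" "a \<in> {1, 2, 3}"
  shows "Perm.apply p a \<in> {1, 2, 3}"
  using assms apply_affected[of p a] unfolding S3_def by (cases "a \<in> affected p") (auto simp: in_affected)

lemma S3_cases:
  assumes "p \<in> S3"
  obtains "p = 1" | "p = t12" | "p = t13" | "p = t23" | "p = c123" | "p = c132"
proof -
  have range: "Perm.apply p a \<in> {1, 2, 3}" if "a \<in> {1, 2, 3}" for a
    using apply_in_S3_range[OF assms that] .
  have "Perm.apply p 1 \<noteq> Perm.apply p 2" "Perm.apply p 1 \<noteq> Perm.apply p 3"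
    "Perm.apply p 2 \<noteq> Perm.apply p 3"
    by (simp_all add: apply_inj)
  with range[of 1] range[of 2] range[of 3] consider
      "Perm.apply p 1 = 1" "Perm.apply p 2 = 2" "Perm.apply p 3 = 3"
    | "Perm.apply p 1 = 2" "Perm.apply p 2 = 1" "Perm.apply p 3 = 3"
    | "Perm.apply p 1 = 3" "Perm.apply p 2 = 2" "Perm.apply p 3 = 1"
    | "Perm.apply p 1 = 1" "Perm.apply p 2 = 3" "Perm.apply p 3 = 2"
    | "Perm.apply p 1 = 2" "Perm.apply p 2 = 3" "Perm.apply p 3 = 1"
    | "Perm.apply p 1 = 3" "Perm.apply p 2 = 1" "Perm.apply p 3 = 2"
    by auto
  then show ?thesis
    using that S3_eq_iff[OF assms] by cases (simp_all add: S3_simps)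
qed

lemma S3_explicit: "S3 = {1, t12, t13, t23, c123, c132}"
  using S3_cases one_in_S3 generators_in_S3 by blast

lemma distinct_S3: "distinct [1, t12, t13, t23, c123, c132]"
  by (simp add: S3_eq_iff S3_simps)

lemma sum_S3: "sum f S3 = f 1 + f t12 + f t13 + f t23 + f c123 + f c132"
  unfolding S3_explicit using distinct_S3 by (simp add: add.assoc)

lemma finite_S3 [simp]: "finite S3"
  unfolding S3_explicit by simp

lemma card_S3: "card S3 = 6"
  unfolding S3_explicit using distinct_S3 by simp

lemma inverse_generators:
  "inverse t12 = t12" "inverse t13 = t13" "inverse t23 = t23"
  "inverse c123 = c132" "inverse c132 = c123"
proof -
  show "inverse t12 = t12" "inverse t13 = t13" "inverse t23 = t23"
    by (simp_all add: t12_def t13_def t23_def)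
  have "c123 * c132 = 1" by (simp add: S3_eq_iff S3_simps)
  then show "inverse c123 = c132" "inverse c132 = c123"
    by (metis perm.inverse_unique perm.inverse_inverse)+
qed

definition supported :: "meas \<Rightarrow> bool" where
  "supported f \<longleftrightarrow> (\<forall>z. z \<notin> S3 \<longrightarrow> f z = 0)"

definition count_S3 :: meas where
  "count_S3 = (\<lambda>z. if z \<in> S3 then 1 else 0)"

lemma conv_outside_S3: "z \<notin> S3 \<Longrightarrow> conv f g z = 0"
  unfolding conv_def by (auto intro!: sum.neutral simp: times_in_S3)

lemma conv_eq_sum_left:
  assumes "z \<in> S3"
  shows "conv f g z = (\<Sum>x\<in>S3. f x * g (inverse x * z))"
  unfolding conv_def
proof (rule sum.cong [OF refl])
  fix x assume "x \<in> S3"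
  have "x * y = z \<longleftrightarrow> y = inverse x * z" for y
    by (metis mult.assoc perm.left_inverse perm.right_inverse mult_1_left)
  then show "(\<Sum>y\<in>S3. if x * y = z then f x * g y else 0) = f x * g (inverse x * z)"
    using \<open>x \<in> S3\<close> assms by (simp add: times_in_S3 inverse_in_S3)
qed

lemma conv_eq_sum_right:
  assumes "z \<in> S3"
  shows "conv f g z = (\<Sum>y\<in>S3. f (z * inverse y) * g y)"
proof -
  have "conv f g z = (\<Sum>y\<in>S3. \<Sum>x\<in>S3. if x * y = z then f x * g y else 0)"
    unfolding conv_def by (rule sum.swap)
  also have "\<dots> = (\<Sum>y\<in>S3. f (z * inverse y) * g y)"
  proof (rule sum.cong [OF refl])
    fix y assume "y \<in> S3"
    have "x * y = z \<longleftrightarrow> x = z * inverse y" for x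
      by (metis mult.assoc perm.left_inverse perm.right_inverse mult_1_right)
    then show "(\<Sum>x\<in>S3. if x * y = z then f x * g y else 0) = f (z * inverse y) * g y"
      using \<open>y \<in> S3\<close> assms by (simp add: times_in_S3 inverse_in_S3)
  qed
  finally show ?thesis .
qed

lemma delta_id_mult: "delta_id x * c = (if x = 1 then c else 0)"
  and mult_delta_id: "c * delta_id x = (if x = 1 then c else 0)"
  by (simp_all add: delta_id_def)

lemma conv_delta_left: "conv delta_id g z = (if z \<in> S3 then g z else 0)"
  by (simp add: conv_outside_S3 conv_eq_sum_left delta_id_mult one_in_S3)

lemma conv_delta_right: "conv f delta_id z = (if z \<in> S3 then f z else 0)"
  by (simp add: conv_outside_S3 conv_eq_sum_right mult_delta_id one_in_S3)

lemma conv_count_left: "conv count_S3 g z = (if z \<in> S3 then sum g S3 else 0)"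
  by (auto simp: conv_outside_S3 conv_eq_sum_right count_S3_def times_in_S3 inverse_in_S3)

lemma conv_count_right: "conv f count_S3 z = (if z \<in> S3 then sum f S3 else 0)"
  by (auto simp: conv_outside_S3 conv_eq_sum_left count_S3_def times_in_S3 inverse_in_S3)

definition mix :: "real \<Rightarrow> real \<Rightarrow> real \<Rightarrow> meas \<Rightarrow> meas" where
  "mix a b c w = (\<lambda>z. a * delta_id z + b * count_S3 z + c * w z)"

definition null_square :: "meas \<Rightarrow> bool" where
  "null_square w \<longleftrightarrow> supported w \<and> sum w S3 = 0 \<and> conv w w = (\<lambda>_. 0)"

lemma sum_delta_id: "sum delta_id S3 = 1"
  by (simp add: delta_id_def one_in_S3)

lemma sum_count_S3: "sum count_S3 S3 = 6"
  by (simp add: count_S3_def card_S3)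

lemma sum_mix: "sum (mix a b c w) S3 = a + 6 * b + c * sum w S3"
  by (simp add: mix_def sum.distrib sum_delta_id sum_count_S3 flip: sum_distrib_left)

lemma conv_add_left: "conv (\<lambda>x. f x + g x) h z = conv f h z + conv g h z"
  and conv_add_right: "conv h (\<lambda>x. f x + g x) z = conv h f z + conv h g z"
  unfolding conv_def by (auto simp: algebra_simps simp flip: sum.distrib intro!: sum.cong)

lemma conv_scale_left: "conv (\<lambda>x. c * f x) h z = c * conv f h z"
  and conv_scale_right: "conv h (\<lambda>x. c * f x) z = c * conv h f z"
  unfolding conv_def by (auto simp: sum_distrib_left intro!: sum.cong)

lemma conv_mix_left:
  "conv (mix a b c w) h z = a * conv delta_id h z + b * conv count_S3 h z + c * conv w h z"
  unfolding mix_def by (simp add: conv_add_left conv_scale_left)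

lemma conv_mix_right:
  "conv h (mix a b c w) z = a * conv h delta_id z + b * conv h count_S3 z + c * conv h w z"
  unfolding mix_def by (simp add: conv_add_right conv_scale_right)

lemma conv_mix:
  assumes "null_square w"
  shows "conv (mix a1 b1 c1 w) (mix a2 b2 c2 w)
    = mix (a1 * a2) (a1 * b2 + b1 * a2 + 6 * b1 * b2) (a1 * c2 + c1 * a2) w"
proof
  fix z
  have w: "supported w" "sum w S3 = 0" "conv w w z = 0"
    using assms by (auto simp: null_square_def)
  show "conv (mix a1 b1 c1 w) (mix a2 b2 c2 w) z
    = mix (a1 * a2) (a1 * b2 + b1 * a2 + 6 * b1 * b2) (a1 * c2 + c1 * a2) w z"
  proof (cases "z \<in> S3")
    case True
    then show ?thesis
      using w by (simp add: conv_mix_left conv_mix_right conv_delta_left conv_delta_right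
          conv_count_left conv_count_right sum_delta_id sum_count_S3 sum_mix)
        (simp add: mix_def count_S3_def algebra_simps)
  next
    case False
    moreover have "z \<noteq> 1"
      using False one_in_S3 by blast
    ultimately show ?thesis
      using w(1) by (simp add: conv_outside_S3 mix_def supported_def delta_id_def count_S3_def)
  qed
qed

(* At n = 0 the junk value a ^ (n - 1) is harmless: it is multiplied by real n = 0. *)
lemma conv_pow_mix:
  assumes "null_square w"
  shows "conv_pow (mix a b c w) n
    = mix (a ^ n) (((a + 6 * b) ^ n - a ^ n) / 6) (real n * a ^ (n - 1) * c) w"
proof (induction n)
  case 0
  show ?case by (simp add: conv_pow_def mix_def)
next
  case (Suc n)
  have "conv_pow (mix a b c w) (Suc n) = conv (mix a b c w) (conv_pow (mix a b c w) n)"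
    by (simp add: conv_pow_def)
  also have "\<dots> = mix (a ^ Suc n) (((a + 6 * b) ^ Suc n - a ^ Suc n) / 6)
      (real (Suc n) * a ^ (Suc n - 1) * c) w"
  proof -
    have "a * (((a + 6 * b) ^ n - a ^ n) / 6) + b * a ^ n
        + 6 * b * (((a + 6 * b) ^ n - a ^ n) / 6) = ((a + 6 * b) ^ Suc n - a ^ Suc n) / 6"
      by (simp add: field_simps)
    moreover have "a * (real n * a ^ (n - 1) * c) + c * a ^ n = real (Suc n) * a ^ (Suc n - 1) * c"
      by (cases n) (simp_all add: algebra_simps)
    ultimately show ?thesis
      unfolding Suc.IH conv_mix [OF assms] by (simp only: power_Suc)
  qed
  finally show ?case .
qed

lemma sums_exp_real: "(\<lambda>k. x ^ k / fact k) sums exp (x :: real)"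
  using exp_converges [of x] by (simp add: divide_inverse mult.commute)

lemma sums_exp_real_index:
  "(\<lambda>k. real k * t ^ k * a ^ (k - 1) / fact k) sums (t * exp (t * a :: real))"
proof -
  have "(\<lambda>k. real (Suc k) * t ^ Suc k * a ^ (Suc k - 1) / fact (Suc k))
      = (\<lambda>k. t * ((t * a) ^ k / fact k))"
    by (simp add: fact_Suc power_mult_distrib del: of_nat_Suc)
  then show ?thesis
    using sums_mult [OF sums_exp_real, of t "t * a"]
      sums_Suc_iff [of "\<lambda>k. real k * t ^ k * a ^ (k - 1) / fact k"] by simp
qed

lemma cpp_mix:
  assumes "null_square w"
  shows "cpp (mix a b c w) t
    = mix (exp (- 6 * b * t)) ((1 - exp (- 6 * b * t)) / 6) (t * c * exp (- 6 * b * t)) w"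
proof
  fix z
  let ?d = "delta_id z" and ?e = "count_S3 z / 6" and ?v = "c * w z"
  let ?term = "\<lambda>k. ?d * (t ^ k * a ^ k / fact k) + ?e * (t ^ k * (a + 6 * b) ^ k / fact k)
        - ?e * (t ^ k * a ^ k / fact k) + ?v * (real k * t ^ k * a ^ (k - 1) / fact k)"
  have "t ^ k / fact k * conv_pow (mix a b c w) k z = ?term k" for k
    unfolding conv_pow_mix [OF assms] unfolding mix_def by (simp add: field_simps)
  moreover have "?term sums (?d * exp (t * a) + ?e * exp (t * (a + 6 * b)) - ?e * exp (t * a)
      + ?v * (t * exp (t * a)))"
    using sums_exp_real [of "t * a"] sums_exp_real [of "t * (a + 6 * b)"]
    unfolding power_mult_distrib by (intro sums_add sums_diff sums_mult sums_exp_real_index)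
  ultimately have series: "(\<Sum>k. t ^ k / fact k * conv_pow (mix a b c w) k z)
      = ?d * exp (t * a) + ?e * exp (t * (a + 6 * b)) - ?e * exp (t * a) + ?v * (t * exp (t * a))"
    by (simp add: sums_iff)
  have mass: "sum (mix a b c w) S3 = a + 6 * b"
    using assms by (simp add: sum_mix null_square_def)
  have "exp (- t * (a + 6 * b)) * exp (t * a) = exp (- 6 * b * t)"
    and "exp (- t * (a + 6 * b)) * exp (t * (a + 6 * b)) = 1"
    by (simp_all flip: exp_add) (simp add: algebra_simps)
  then show "cpp (mix a b c w) t z
      = mix (exp (- 6 * b * t)) ((1 - exp (- 6 * b * t)) / 6) (t * c * exp (- 6 * b * t)) w z"
    unfolding cpp_def series mass by (simp add: mix_def algebra_simps diff_divide_distrib)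
qed

lemma perm_inverse_times_cancel [simp]:
  "inverse g * (g * x) = (x :: 'a perm)" "g * (inverse g * x) = (x :: 'a perm)"
  by (simp_all flip: mult.assoc)

lemma conj_eq_iff: "inverse g * x * g = y \<longleftrightarrow> x = g * y * inverse (g :: 'a perm)"
  by (metis mult.assoc perm.left_inverse perm.right_inverse mult_1_left mult_1_right)

lemma conj_img_eq:
  assumes "g \<in> S3"
  shows "conj_img f g y = (if y \<in> S3 then f (g * y * inverse g) else 0)"
proof (cases "y \<in> S3")
  case True
  with assms show ?thesis
    unfolding conj_img_def by (simp add: conj_eq_iff times_in_S3 inverse_in_S3)
next
  case False
  with assms have "inverse g * x * g \<noteq> y" if "x \<in> S3" for x
    using that by (metis times_in_S3 inverse_in_S3)
  with False show ?thesis
    unfolding conj_img_def by (auto intro!: sum.neutral)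
qed

lemma conj_img_mix:
  assumes "g \<in> S3"
  shows "conj_img (mix a b c w) g = mix a b c (conj_img w g)"
proof
  fix y
  have "g * y * inverse g = 1 \<longleftrightarrow> y = 1"
    by (metis conj_eq_iff mult_1_left mult_1_right perm.left_inverse)
  with assms one_in_S3 show "conj_img (mix a b c w) g y = mix a b c (conj_img w g) y"
    by (auto simp: conj_img_eq mix_def delta_id_def count_S3_def times_in_S3 inverse_in_S3)
qed

lemma sum_conj_img:
  assumes "g \<in> S3"
  shows "sum (conj_img f g) S3 = sum f S3"
proof -
  have "sum (conj_img f g) S3 = (\<Sum>y\<in>S3. f (g * y * inverse g))"
    using assms by (simp add: conj_img_eq)
  also have "\<dots> = sum f S3"
    by (rule sum.reindex_bij_witness [of _ "\<lambda>x. inverse g * x * g" "\<lambda>y. g * y * inverse g"])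
      (use assms in \<open>auto simp: mult.assoc times_in_S3 inverse_in_S3\<close>)
  finally show ?thesis .
qed

lemma conv_conj_img:
  assumes "g \<in> S3" "z \<in> S3"
  shows "conv (conj_img f g) (conj_img h g) z = conv f h (g * z * inverse g)"
proof -
  have "conv (conj_img f g) (conj_img h g) z
      = (\<Sum>x\<in>S3. f (g * x * inverse g) * h (g * (inverse x * z) * inverse g))"
    using assms by (simp add: conv_eq_sum_left conj_img_eq times_in_S3 inverse_in_S3)
  also have "\<dots> = (\<Sum>x\<in>S3. f x * h (inverse x * (g * z * inverse g)))"
    by (rule sum.reindex_bij_witness [of _ "\<lambda>x. inverse g * x * g" "\<lambda>y. g * y * inverse g"])
      (use assms in \<open>auto simp: mult.assoc times_in_S3 inverse_in_S3\<close>)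
  also have "\<dots> = conv f h (g * z * inverse g)"
    using assms by (simp add: conv_eq_sum_left times_in_S3 inverse_in_S3)
  finally show ?thesis .
qed

lemma null_square_conj_img:
  assumes "null_square w" "g \<in> S3"
  shows "null_square (conj_img w g)"
proof -
  have "conv (conj_img w g) (conj_img w g) z = 0" for z
    using assms by (cases "z \<in> S3") (simp_all add: conv_conj_img conv_outside_S3 null_square_def)
  moreover have "sum (conj_img w g) S3 = 0"
    using assms by (simp add: sum_conj_img null_square_def)
  ultimately show ?thesis
    using assms by (auto simp: null_square_def supported_def conj_img_eq)
qed

lemma avg_conj_mix:
  assumes "null_square w" and class_avg: "\<And>y. (\<Sum>g\<in>S3. conj_img w g y) = 0"
  shows "avg_conj (mix a b c w) n = conv_pow (mix a b 0 w) n"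
proof
  fix y
  define A B C where "A = a ^ n" and "B = ((a + 6 * b) ^ n - a ^ n) / 6"
    and "C = real n * a ^ (n - 1) * c"
  have "conv_pow (conj_img (mix a b c w) g) n = mix A B C (conj_img w g)" if "g \<in> S3" for g
    unfolding conj_img_mix [OF that] conv_pow_mix [OF null_square_conj_img [OF assms(1) that]]
      A_def B_def C_def ..
  then have "avg_conj (mix a b c w) n y = (\<Sum>g\<in>S3. mix A B C (conj_img w g) y) / 6"
    unfolding avg_conj_def card_S3 by simp
  also have "\<dots> = (6 * (A * delta_id y + B * count_S3 y) + C * (\<Sum>g\<in>S3. conj_img w g y)) / 6"
    by (simp add: mix_def sum.distrib card_S3 flip: sum_distrib_left)
  also have "\<dots> = conv_pow (mix a b 0 w) n y"
    unfolding class_avg conv_pow_mix [OF assms(1)] by (simp add: mix_def A_def B_def)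
  finally show "avg_conj (mix a b c w) n y = conv_pow (mix a b 0 w) n y" .
qed

lemma prob_meas_mix:
  assumes "0 \<le> a" "0 \<le> b" "a + 6 * b = 1"
  shows "prob_meas (mix a b 0 w)"
proof -
  have "sum (mix a b 0 w) S3 = 1"
    using assms by (simp add: sum_mix)
  then show ?thesis
    using assms one_in_S3 by (auto simp: prob_meas_def mix_def delta_id_def count_S3_def)
qed

definition nu :: meas where
  "nu = (\<lambda>z. if z = t12 then -1 else if z = t23 then 1
    else if z = c123 then 1 else if z = c132 then -1 else 0)"

lemma null_square_nu: "null_square nu"
proof -
  have "conv nu nu z = 0" if "z \<in> S3" for z
    using that by (cases rule: S3_cases)
      (simp_all add: conv_eq_sum_left sum_S3 nu_def inverse_generators S3_eq_iff S3_simps)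
  then have "conv nu nu = (\<lambda>_. 0)"
    using conv_outside_S3 by blast
  moreover have "supported nu"
    using generators_in_S3 by (auto simp: supported_def nu_def)
  moreover have "sum nu S3 = 0"
    by (simp add: sum_S3 nu_def S3_eq_iff S3_simps)
  ultimately show ?thesis
    by (simp add: null_square_def)
qed

lemma sum_conj_img_nu: "(\<Sum>g\<in>S3. conj_img nu g y) = 0"
proof (cases "y \<in> S3")
  case True
  then show ?thesis
    by (cases rule: S3_cases)
      (simp_all add: conj_img_eq sum_S3 nu_def inverse_generators S3_eq_iff S3_simps)
qed (simp add: conj_img_eq)

lemma jm_eq_mix: "jm = mix (-1) 1 1 nu"
proof
  fix z
  show "jm z = mix (-1) 1 1 nu z"
  proof (cases "z \<in> S3")
    case True
    then show ?thesis
      by (cases rule: S3_cases) (simp_all add: jm_def mix_def delta_id_def count_S3_def nu_def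
          S3_eq_iff S3_simps del: cycle.simps flip: t13_def t23_def c123_def)
  next
    case False
    then have "z \<noteq> 1" "z \<noteq> t12" "z \<noteq> t13" "z \<noteq> t23" "z \<noteq> c123" "z \<noteq> c132"
      using one_in_S3 generators_in_S3 by auto
    with False show ?thesis
      by (simp add: jm_def mix_def delta_id_def count_S3_def nu_def
          del: cycle.simps flip: t13_def t23_def c123_def)
  qed
qed

lemma jm0_eq_mix: "jm0 = mix (-1) 1 0 nu"
  by (auto simp: jm0_def mix_def delta_id_def count_S3_def one_in_S3)

theorem lemma8p17:
  shows "quasi_invariant (cpp jm 1) \<and> (\<forall>n. avg_conj (cpp jm 1) n = conv_pow (cpp jm0 1) n)"
proof -
  define \<alpha> :: real where "\<alpha> = exp (- 6)"
  have mu: "cpp jm 1 = mix \<alpha> ((1 - \<alpha>) / 6) \<alpha> nu"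
    unfolding jm_eq_mix cpp_mix [OF null_square_nu] \<alpha>_def by simp
  have eta: "cpp jm0 1 = mix \<alpha> ((1 - \<alpha>) / 6) 0 nu"
    unfolding jm0_eq_mix cpp_mix [OF null_square_nu] \<alpha>_def by simp
  have "\<forall>n. avg_conj (cpp jm 1) n = conv_pow (cpp jm0 1) n"
    unfolding mu eta using avg_conj_mix [OF null_square_nu sum_conj_img_nu] by blast
  moreover have "prob_meas (cpp jm0 1)"
    unfolding eta by (rule prob_meas_mix) (simp_all add: \<alpha>_def field_simps)
  ultimately show ?thesis
    unfolding quasi_invariant_def by blast
qed

end
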